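(* Let $V=V_{\bar0}\oplus V_{\bar1}$ be an $\mathcal{L}$-module which is free of rank $2$ as a $\mathbb{C}[L_{0,0}]$-module, with homogeneous basis elements $1_{\bar0}\in V_{\bar0}$ and $1_{\bar1}\in V_{\bar1}$, so $V_{\bar0}=\mathbb{C}[L_{0,0}]1_{\bar0}$ and $V_{\bar1}=\mathbb{C}[L_{0,0}]1_{\bar1}$. Write $f(t)1_{\bar0}:=f(L_{0,0})1_{\bar0}$ and $g(x)1_{\bar1}:=g(L_{0,0})1_{\bar1}$ for polynomials $f,g$. Suppose $\lambda,\mu\in\mathbb{C}^*$ and $a,b,c,d\in\mathbb{C}$ are such that for all $f\in\mathbb{C}[t]$, $g\in\mathbb{C}[x]$, $m\in\mathbb{Z}$, $i\in\mathbb{Z}_+$: $L_{m,i}f(t)1_{\bar0}=\lambda^m(\delta_{i,0}(t-mqa)+\delta_{q,-1}\delta_{i,1}b)f(t-mq)1_{\bar0}$ and $L_{m,i}g(x)1_{\bar1}=\mu^m(\delta_{i,0}(x-mqc)+\delta_{q,-1}\delta_{i,1}d)g(x-mq)1_{\bar1}$. Then $\lambda=\mu$, $\delta_{q,-1}b=\delta_{q,-1}d$, and there exists $e\in\mathbb{C}^*$ such that one of the following holds: (i) $c=a+\frac12$, $G_{\frac12,0}1_{\bar0}=e1_{\bar1}$, $G_{\frac12,1}1_{\bar0}=0$, $G_{\frac12,1}1_{\bar1}=\frac{2q}{e}\lambda\delta_{q,-1}b1_{\bar0}$, $G_{\frac12,0}1_{\bar1}=\frac{q}{e}\lambda(t-qa)1_{\bar0}$;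 (ii) $c=a-\frac12$, $G_{\frac12,0}1_{\bar1}=e1_{\bar0}$, $G_{\frac12,1}1_{\bar1}=0$, $G_{\frac12,1}1_{\bar0}=\frac{2q}{e}\lambda\delta_{q,-1}b1_{\bar1}$, $G_{\frac12,0}1_{\bar0}=\frac{q}{e}\lambda(x-qa+\frac{q}{2})1_{\bar1}$.
   Context: Fix $q\in\mathbb{C}^*$; $\mathbb{Z}_+=\{0,1,2,\dots\}$; $\delta$ is the Kronecker delta. The Neveu-Schwarz-Block algebra $\mathcal{L}$ is the Lie superalgebra over $\mathbb{C}$ with even basis $\{L_{m,i}\mid m\in\mathbb{Z},i\in\mathbb{Z}_+\}$, odd basis $\{G_{l,j}\mid l\in\frac12+\mathbb{Z},j\in\mathbb{Z}_+\}$ and brackets $[L_{m,i},L_{n,j}]=(n(i+q)-m(j+q))L_{m+n,i+j}$, $[L_{m,i},G_{l,j}]=(l(i+q)-m(j+\frac{q}{2}))G_{m+l,i+j}$, $[G_{l,i},G_{r,j}]=2qL_{l+r,i+j}$. Modules are supermodules. Thus $L_{0,0}$ acts on $V_{\bar0}\cong\mathbb{C}[t]$ as multiplication by $t$ and on $V_{\bar1}\cong\mathbb{C}[x]$ as multiplication by $x$. *)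

theory Defs
  imports "HOL-Computational_Algebra.Polynomial"
begin

text \<open>Concrete model of a rank-2 free C[L_{0,0}]-supermodule:
  V = V0 (+) V1 with V0 = C[t] (first component, basis 1_0 = (1,0))
  and V1 = C[x] (second component, basis 1_1 = (0,1)).
  Odd generators are indexed by integers: G k j stands for G_{k+1/2, j}.\<close>

type_synonym V = "complex poly \<times> complex poly"

definition vadd :: "V \<Rightarrow> V \<Rightarrow> V" where
  "vadd u v = (fst u + fst v, snd u + snd v)"

definition vsub :: "V \<Rightarrow> V \<Rightarrow> V" where
  "vsub u v = (fst u - fst v, snd u - snd v)"

definition vsmult :: "complex \<Rightarrow> V \<Rightarrow> V" where
  "vsmult c u = (smult c (fst u), smult c (snd u))"

definition linear_op :: "(V \<Rightarrow> V) \<Rightarrow> bool" where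
  "linear_op T \<longleftrightarrow> (\<forall>u v. T (vadd u v) = vadd (T u) (T v)) \<and> (\<forall>c u. T (vsmult c u) = vsmult c (T u))"

text \<open>V is a module (supermodule) over the Neveu-Schwarz-Block algebra with parameter q:
  L m i is the action of L_{m,i} (even: preserves parity),
  G k j is the action of G_{k+1/2,j} (odd: swaps parity);
  even-even and even-odd brackets act as commutators, odd-odd as anticommutators.\<close>
definition NSB_module :: "complex \<Rightarrow> (int \<Rightarrow> nat \<Rightarrow> V \<Rightarrow> V) \<Rightarrow> (int \<Rightarrow> nat \<Rightarrow> V \<Rightarrow> V) \<Rightarrow> bool" where
  "NSB_module q L G \<longleftrightarrow>
     (\<forall>m i. linear_op (L m i)) \<and> (\<forall>k j. linear_op (G k j)) \<and>
     (\<forall>m i f. snd (L m i (f, 0)) = 0) \<and> (\<forall>m i g. fst (L m i (0, g)) = 0) \<and>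
     (\<forall>k j f. fst (G k j (f, 0)) = 0) \<and> (\<forall>k j g. snd (G k j (0, g)) = 0) \<and>
     (\<forall>m i n j v. vsub (L m i (L n j v)) (L n j (L m i v)) =
        vsmult (of_int n * (of_nat i + q) - of_int m * (of_nat j + q)) (L (m + n) (i + j) v)) \<and>
     (\<forall>m i k j v. vsub (L m i (G k j v)) (G k j (L m i v)) =
        vsmult ((of_int k + 1/2) * (of_nat i + q) - of_int m * (of_nat j + q/2)) (G (m + k) (i + j) v)) \<and>
     (\<forall>k i k' j v. vadd (G k i (G k' j v)) (G k' j (G k i v)) =
        vsmult (2 * q) (L (k + k' + 1) (i + j) v))"

definition kd :: "complex \<Rightarrow> complex \<Rightarrow> complex" where
  "kd u v = (if u = v then 1 else 0)"

end

theory Submission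
  imports Defs
begin

text \<open>Since L_{0,0} acts by the variable and [L_{0,0}, G_{k+1/2,j}] = (k+1/2) q G_{k+1/2,j},
  an odd operator is determined by its values on 1_0 and 1_1:
  G_{k+1/2,j} (f 1_0) = f(x - (k+1/2) q) G_{k+1/2,j} 1_0, and symmetrically on V_1.
  Writing G_{1/2,0} 1_0 = A 1_1 and G_{1/2,0} 1_1 = B 1_0, the relation G_{1/2,0}^2 = q L_{1,0}
  becomes A(t - q/2) B(t) = q \<lambda> (t - q a) and B(x - q/2) A(x) = q \<mu> (x - q c), so one of
  A, B is a nonzero constant e; comparing coefficients gives \<lambda> = \<mu> and c = a \<plusminus> 1/2.
  The bracket [L_{0,1}, G_{1/2,0}] = (1+q)/2 G_{1/2,1} yields \<delta>_{q,-1} b = \<delta>_{q,-1} d and,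
  for q \<noteq> -1, kills G_{1/2,1} on the constant side; for q = -1 the same conclusion is reached
  through G_{-1/2,0}. The anticommutator of G_{1/2,0} and G_{1/2,1}, which is 2q L_{1,1}, then
  fixes the remaining value. The second alternative is the first one for the module with the
  roles of V_0 and V_1 exchanged.\<close>

lemma pcompose_eq_const_iff:
  fixes p r :: "'a::{comm_ring_1,semiring_no_zero_divisors} poly"
  assumes "degree r > 0"
  shows "pcompose p r = [:a:] \<longleftrightarrow> p = [:a:]"
  using pcompose_eq_0_iff[OF assms, of "p - [:a:]"] by (auto simp: pcompose_diff)

lemma intertwining_map_eq_pcompose:
  fixes S :: "'a::comm_semiring_1 poly \<Rightarrow> 'a poly"
  assumes add: "\<And>f g. S (f + g) = S f + S g"
    and smult: "\<And>c f. S (smult c f) = smult c (S f)"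
    and shift: "\<And>f. S (pCons 0 f) = r * S f"
  shows "S f = pcompose f r * S 1"
proof (induction f)
  case 0
  show ?case using smult[of 0 0] by simp
next
  case (pCons a f)
  have "pCons a f = smult a 1 + pCons 0 f" by simp
  then have "S (pCons a f) = smult a (S 1) + r * S f" by (metis add smult shift)
  then show ?case by (simp add: pCons.IH pcompose_pCons algebra_simps)
qed

lemma shifted_factorisation_const:
  fixes A B :: "'a::field_char_0 poly"
  assumes "q \<noteq> 0" "lam \<noteq> 0" "degree A = 0"
    and AB: "pcompose A [:- (q/2), 1:] * B = smult (q * lam) [:- (q * a), 1:]"
    and BA: "pcompose B [:- (q/2), 1:] * A = smult (q * mu) [:- (q * c), 1:]"
  shows "\<exists>e. e \<noteq> 0 \<and> A = [:e:] \<and> B = smult (q / e * lam) [:- (q * a), 1:] \<and>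
    lam = mu \<and> c = a + 1/2"
proof -
  obtain e where A: "A = [:e:]" using \<open>degree A = 0\<close> by (metis degree_0_id)
  have "smult e B = smult (q * lam) [:- (q * a), 1:]" using AB by (simp add: A)
  moreover from this have "e \<noteq> 0" using assms(1,2) by auto
  ultimately have "smult e B = smult e (smult (q / e * lam) [:- (q * a), 1:])"
    by simp
  then have B: "B = smult (q / e * lam) [:- (q * a), 1:]" by (rule smult_cancel[OF \<open>e \<noteq> 0\<close>])
  have eq: "smult (q * lam) [:- (q * a) - q/2, 1:] = smult (q * mu) [:- (q * c), 1:]"
    using BA \<open>e \<noteq> 0\<close> by (simp add: A B pcompose_pCons algebra_simps)
  have mu: "lam = mu" using arg_cong[OF eq, of "\<lambda>p. coeff p 1"] assms(1) by simp
  have "q * q * lam * (2 * c - 2 * a - 1) = 0"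
    using arg_cong[OF eq, of "\<lambda>p. coeff p 0"] by (simp add: mu field_simps)
  then have "2 * c - 2 * a - 1 = 0" using assms(1,2) by simp
  then have "c = a + 1/2" by (simp add: field_simps)
  with A B mu \<open>e \<noteq> 0\<close> show ?thesis by blast
qed

lemma kd_simps: "kd u u = 1" "kd 0 1 = 0" "kd 1 0 = 0"
  by (simp_all add: kd_def)

text \<open>Exchanging V_0 and V_1 turns the data (\<lambda>, a, b; \<mu>, c, d) of a module into
  (\<mu>, c, d; \<lambda>, a, b); this transfers every statement about one parity to the other.\<close>

definition parity_swap :: "(int \<Rightarrow> nat \<Rightarrow> V \<Rightarrow> V) \<Rightarrow> int \<Rightarrow> nat \<Rightarrow> V \<Rightarrow> V" where
  "parity_swap T m i v = prod.swap (T m i (prod.swap v))"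

lemma parity_swap_eq_iff: "parity_swap T m i v = w \<longleftrightarrow> T m i (prod.swap v) = prod.swap w"
  unfolding parity_swap_def by (metis swap_swap)

lemma NSB_module_parity_swap:
  assumes "NSB_module q L G"
  shows "NSB_module q (parity_swap L) (parity_swap G)"
proof -
  have swap_vadd: "prod.swap (vadd u v) = vadd (prod.swap u) (prod.swap v)"
    and swap_vsub: "prod.swap (vsub u v) = vsub (prod.swap u) (prod.swap v)"
    and swap_vsmult: "prod.swap (vsmult c u) = vsmult c (prod.swap u)" for u v c
    by (simp_all add: vadd_def vsub_def vsmult_def)
  have linear: "linear_op (parity_swap T m i)" if "linear_op (T m i)" for T m i
    using that by (simp add: linear_op_def parity_swap_def swap_vadd swap_vsmult)
  show ?thesis
    using assms unfolding NSB_module_def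
    by (simp add: linear parity_swap_def swap_vadd[symmetric] swap_vsub[symmetric]
        swap_vsmult[symmetric] del: split_paired_All)
qed

lemma NSB_module_G_even_pcompose:
  assumes "NSB_module q L G"
    and L_even: "\<And>f. L 0 0 (f, 0) = (pCons 0 f, 0)" and L_odd: "\<And>g. L 0 0 (0, g) = (0, pCons 0 g)"
  shows "G k j (f, 0) = (0, pcompose f [:- ((of_int k + 1/2) * q), 1:] * snd (G k j (1, 0)))"
proof -
  define \<kappa> where "\<kappa> = (of_int k + 1/2) * q"
  define S where "S f = snd (G k j (f, 0))" for f
  have lin: "linear_op (G k j)" and par: "\<And>f. fst (G k j (f, 0)) = 0"
    and comm: "\<And>v. vsub (L 0 0 (G k j v)) (G k j (L 0 0 v)) = vsmult \<kappa> (G k j v)"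
    using assms(1) unfolding NSB_module_def \<kappa>_def by (simp_all del: split_paired_All)
  have G_S: "G k j (f, 0) = (0, S f)" for f
    using par[of f] by (simp add: S_def prod_eq_iff)
  have "S f = pcompose f [:- \<kappa>, 1:] * S 1"
  proof (rule intertwining_map_eq_pcompose)
    fix f g :: "complex poly" and c :: complex
    have "G k j (vadd (f, 0) (g, 0)) = vadd (G k j (f, 0)) (G k j (g, 0))"
      using lin by (simp add: linear_op_def)
    then show "S (f + g) = S f + S g" by (simp add: G_S vadd_def)
    have "G k j (vsmult c (f, 0)) = vsmult c (G k j (f, 0))"
      using lin by (simp add: linear_op_def)
    then show "S (smult c f) = smult c (S f)" by (simp add: G_S vsmult_def)
    have "vsub (0, pCons 0 (S f)) (0, S (pCons 0 f)) = (0, smult \<kappa> (S f))"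
      using comm[of "(f, 0)"] by (simp add: G_S L_even L_odd vsmult_def)
    then show "S (pCons 0 f) = [:- \<kappa>, 1:] * S f"
      by (simp add: vsub_def algebra_simps)
  qed
  then show ?thesis by (simp add: G_S \<kappa>_def)
qed

lemma NSB_module_G_odd_pcompose:
  assumes "NSB_module q L G"
    and L_even: "\<And>f. L 0 0 (f, 0) = (pCons 0 f, 0)" and L_odd: "\<And>g. L 0 0 (0, g) = (0, pCons 0 g)"
  shows "G k j (0, g) = (pcompose g [:- ((of_int k + 1/2) * q), 1:] * fst (G k j (0, 1)), 0)"
proof -
  have "parity_swap G k j (g, 0) =
      (0, pcompose g [:- ((of_int k + 1/2) * q), 1:] * snd (parity_swap G k j (1, 0)))"
    by (rule NSB_module_G_even_pcompose[OF NSB_module_parity_swap[OF assms(1)]])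
      (simp_all add: parity_swap_def L_even L_odd)
  then show ?thesis by (simp add: parity_swap_def prod_eq_iff)
qed

locale NSB_rank_two_module =
  fixes q lam mu a b c d :: complex
    and L G :: "int \<Rightarrow> nat \<Rightarrow> V \<Rightarrow> V"
  assumes q_nonzero: "q \<noteq> 0" and lam_nonzero: "lam \<noteq> 0" and mu_nonzero: "mu \<noteq> 0"
    and module: "NSB_module q L G"
    and L_even: "\<And>m i f. L m i (f, 0) =
       (smult (lam powi m)
          (([:kd (of_nat i) 0 * (- (of_int m * q * a)), kd (of_nat i) 0:]
            + [:kd q (-1) * kd (of_nat i) 1 * b:])
           * pcompose f [:- (of_int m * q), 1:]), 0)"
    and L_odd: "\<And>m i g. L m i (0, g) =
       (0, smult (mu powi m)
          (([:kd (of_nat i) 0 * (- (of_int m * q * c)), kd (of_nat i) 0:]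
            + [:kd q (-1) * kd (of_nat i) 1 * d:])
           * pcompose g [:- (of_int m * q), 1:]))"

lemma (in NSB_rank_two_module) NSB_rank_two_module_parity_swap:
  "NSB_rank_two_module q mu lam c d a b (parity_swap L) (parity_swap G)"
  by unfold_locales
    (simp_all add: q_nonzero lam_nonzero mu_nonzero NSB_module_parity_swap[OF module]
      parity_swap_def L_even L_odd)

context NSB_rank_two_module
begin

lemma G_even_parity: "fst (G k j (f, 0)) = 0"
  and G_odd_parity: "snd (G k j (0, g)) = 0"
  using module unfolding NSB_module_def by (simp_all del: split_paired_All)

lemma LG_commutator:
  "vsub (L m i (G k j v)) (G k j (L m i v)) =
     vsmult ((of_int k + 1/2) * (of_nat i + q) - of_int m * (of_nat j + q/2)) (G (m + k) (i + j) v)"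
  using module unfolding NSB_module_def by (simp del: split_paired_All)

lemma GG_anticommutator:
  "vadd (G k i (G k' j v)) (G k' j (G k i v)) = vsmult (2 * q) (L (k + k' + 1) (i + j) v)"
  using module unfolding NSB_module_def by (simp del: split_paired_All)

lemma L_zero_zero_even: "L 0 0 (f, 0) = (pCons 0 f, 0)"
  using L_even[of 0 0] by (simp add: kd_def)

lemma L_zero_zero_odd: "L 0 0 (0, g) = (0, pCons 0 g)"
  using L_odd[of 0 0] by (simp add: kd_def)

lemma G_even: "G k j (f, 0) = (0, pcompose f [:- ((of_int k + 1/2) * q), 1:] * snd (G k j (1, 0)))"
  by (rule NSB_module_G_even_pcompose[OF module L_zero_zero_even L_zero_zero_odd])

lemma G_zero_even: "G 0 j (f, 0) = (0, pcompose f [:- (q/2), 1:] * snd (G 0 j (1, 0)))"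
  using G_even[of 0 j f] by simp

lemma G_zero_odd: "G 0 j (0, g) = (pcompose g [:- (q/2), 1:] * fst (G 0 j (0, 1)), 0)"
  using NSB_module_G_odd_pcompose[OF module L_zero_zero_even L_zero_zero_odd, of 0 j g] by simp

lemma G_zero_zero_square:
  "pcompose (snd (G 0 0 (1, 0))) [:- (q/2), 1:] * fst (G 0 0 (0, 1)) = smult (q * lam) [:- (q * a), 1:]"
proof -
  obtain A where A: "G 0 0 (1, 0) = (0, A)" by (metis G_even_parity prod.collapse)
  have "G 0 0 (G 0 0 (1, 0)) = (pcompose A [:- (q/2), 1:] * fst (G 0 0 (0, 1)), 0)"
    by (simp add: A G_zero_odd[of 0 A])
  moreover have "L 1 0 (1, 0) = (smult lam [:- (q * a), 1:], 0)" by (simp add: L_even kd_def pcompose_1)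
  ultimately have "smult 2 (pcompose A [:- (q/2), 1:] * fst (G 0 0 (0, 1))) =
      smult 2 (smult (q * lam) [:- (q * a), 1:])"
    using GG_anticommutator[of 0 0 0 0 "(1, 0)"]
    by (simp add: vadd_def vsmult_def mult_2[symmetric] numeral_mult_conv_smult)
  from smult_cancel[OF _ this] show ?thesis by (simp add: A)
qed

lemma G_zero_zero_square_odd:
  "pcompose (fst (G 0 0 (0, 1))) [:- (q/2), 1:] * snd (G 0 0 (1, 0)) = smult (q * mu) [:- (q * c), 1:]"
proof -
  interpret swapped: NSB_rank_two_module q mu lam c d a b "parity_swap L" "parity_swap G"
    by (rule NSB_rank_two_module_parity_swap)
  show ?thesis using swapped.G_zero_zero_square by (simp add: parity_swap_def)
qed

lemma G_zero_zero_degree_cases: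
  "degree (snd (G 0 0 (1, 0))) = 0 \<or> degree (fst (G 0 0 (0, 1))) = 0"
proof -
  let ?A = "pcompose (snd (G 0 0 (1, 0))) [:- (q/2), 1:]" and ?B = "fst (G 0 0 (0, 1))"
  have "degree (?A * ?B) = 1" using G_zero_zero_square q_nonzero lam_nonzero by simp
  then have "?A \<noteq> 0" "?B \<noteq> 0" by auto
  with \<open>degree (?A * ?B) = 1\<close> have "degree ?A + degree ?B = 1" by (simp add: degree_mult_eq)
  then have "degree (snd (G 0 0 (1, 0))) + degree ?B = 1" by (simp add: degree_pcompose)
  then show ?thesis by linarith
qed

lemma G_zero_zero_even_const:
  assumes "degree (snd (G 0 0 (1, 0))) = 0"
  obtains e where "e \<noteq> 0" "G 0 0 (1, 0) = (0, [:e:])"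
    "G 0 0 (0, 1) = (smult (q / e * lam) [:- (q * a), 1:], 0)" "lam = mu" "c = a + 1/2"
proof -
  obtain e where "e \<noteq> 0" "snd (G 0 0 (1, 0)) = [:e:]"
    "fst (G 0 0 (0, 1)) = smult (q / e * lam) [:- (q * a), 1:]" "lam = mu" "c = a + 1/2"
    using shifted_factorisation_const[OF q_nonzero lam_nonzero assms
        G_zero_zero_square G_zero_zero_square_odd] by blast
  with G_even_parity G_odd_parity that show ?thesis by (simp add: prod_eq_iff)
qed

lemma L_zero_one_commutator:
  "smult (kd q (-1) * (d - b)) (snd (G 0 0 (1, 0))) = smult ((1 + q) / 2) (snd (G 0 1 (1, 0)))"
proof -
  obtain A where A: "G 0 0 (1, 0) = (0, A)" by (metis G_even_parity prod.collapse)
  obtain C where C: "G 0 1 (1, 0) = (0, C)" by (metis G_even_parity prod.collapse)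
  have "L 0 1 (1, 0) = ([:kd q (-1) * b:], 0)" by (simp add: L_even kd_def pcompose_1)
  then have "G 0 0 (L 0 1 (1, 0)) = (0, smult (kd q (-1) * b) A)"
    by (simp add: G_zero_even[of 0 "[:kd q (-1) * b:]"] A)
  moreover have "L 0 1 (0, A) = (0, smult (kd q (-1) * d) A)" by (simp add: L_odd kd_def)
  ultimately show ?thesis
    using LG_commutator[of 0 1 0 0 "(1, 0)"]
    by (simp add: A C vsub_def vsmult_def smult_diff_left algebra_simps)
qed

lemma delta_b_eq_delta_d: "kd q (-1) * b = kd q (-1) * d"
proof (cases "q = -1")
  case True
  have "snd (G 0 0 (1, 0)) \<noteq> 0" using G_zero_zero_square q_nonzero lam_nonzero by auto
  with L_zero_one_commutator True show ?thesis by (simp add: kd_def)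
next
  case False
  then show ?thesis by (simp add: kd_def)
qed

lemma G_zero_one_even_eq_zero_of_ne: "q \<noteq> -1 \<Longrightarrow> G 0 1 (1, 0) = (0, 0)"
  using L_zero_one_commutator G_even_parity[of 0 1 1]
  by (simp add: kd_def add_eq_0_iff prod_eq_iff)

lemma G_minus_one_zero_even:
  assumes "degree (snd (G 0 0 (1, 0))) = 0"
  shows "G (-1) 0 (1, 0) = (0, smult (inverse lam) (snd (G 0 0 (1, 0))))"
proof -
  obtain e where A: "G 0 0 (1, 0) = (0, [:e:])" and "lam = mu" "c = a + 1/2"
    using G_zero_zero_even_const[OF assms] by blast
  obtain Y where Y: "G (-1) 0 (1, 0) = (0, Y)" by (metis G_even_parity prod.collapse)
  have "vsub (L (-1) 0 (G 0 0 (1, 0))) (G 0 0 (L (-1) 0 (1, 0))) = vsmult q (G (-1) 0 (1, 0))"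
    using LG_commutator[of "-1" 0 0 0 "(1, 0)"] by simp
  moreover have "L (-1) 0 (0, [:e:]) = (0, smult (e / lam) [:q * c, 1:])"
    using \<open>lam = mu\<close> by (simp add: L_odd kd_simps field_simps)
  moreover have "G 0 0 (L (-1) 0 (1, 0)) = (0, smult (e / lam) [:q * a - q/2, 1:])"
    using G_zero_even[of 0 "smult (inverse lam) [:q * a, 1:]"] lam_nonzero
    by (simp add: L_even kd_simps pcompose_1 A pcompose_pCons field_simps)
  ultimately have "smult q Y = [:e * (q * c) / lam - e * (q * a - q/2) / lam:]"
    by (simp add: A Y vsub_def vsmult_def)
  also have "\<dots> = smult q [:e / lam:]"
    using lam_nonzero by (simp add: \<open>c = a + 1/2\<close> field_simps)
  finally have "Y = [:e / lam:]" by (rule smult_cancel[OF q_nonzero])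
  then show ?thesis by (simp add: A Y field_simps)
qed

lemma G_zero_one_even_eq_zero:
  assumes "degree (snd (G 0 0 (1, 0))) = 0"
  shows "G 0 1 (1, 0) = (0, 0)"
proof (cases "q = -1")
  case True
  \<comment> \<open>Here [L_{0,1}, G_{1/2,0}] = 0, so G_{1/2,1} 1_0 is computed as 2 [L_{1,1}, G_{-1/2,0}] 1_0.\<close>
  obtain e where A: "G 0 0 (1, 0) = (0, [:e:])" and "lam = mu"
    using G_zero_zero_even_const[OF assms] by blast
  obtain C where C: "G 0 1 (1, 0) = (0, C)" by (metis G_even_parity prod.collapse)
  have Y: "G (-1) 0 (1, 0) = (0, [:e / lam:])"
    using G_minus_one_zero_even[OF assms] by (simp add: A field_simps)
  have "(0, smult (1/2) C) = vsmult (1/2) (G 0 1 (1, 0))" unfolding C vsmult_def by simp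
  also have "\<dots> = vsub (L 1 1 (G (-1) 0 (1, 0))) (G (-1) 0 (L 1 1 (1, 0)))"
    using LG_commutator[of 1 1 "-1" 0 "(1, 0)"] True by simp
  also have "L 1 1 (G (-1) 0 (1, 0)) = (0, [:e * kd q (-1) * d:])"
    using \<open>lam = mu\<close> lam_nonzero by (simp add: Y L_odd kd_simps)
  also have "G (-1) 0 (L 1 1 (1, 0)) = (0, [:e * kd q (-1) * b:])"
    using G_even[of "-1" 0 "[:lam * kd q (-1) * b:]"] lam_nonzero
    by (simp add: L_even kd_simps pcompose_1 Y mult.assoc)
  finally have "smult (1/2) C = 0"
    using delta_b_eq_delta_d by (auto simp: vsub_def)
  then show ?thesis unfolding C by simp
qed (rule G_zero_one_even_eq_zero_of_ne)

lemma classification_even_const: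
  assumes "degree (snd (G 0 0 (1, 0))) = 0"
  shows "lam = mu \<and> (\<exists>e. e \<noteq> 0 \<and> c = a + 1/2 \<and>
    G 0 0 (1, 0) = (0, [:e:]) \<and> G 0 1 (1, 0) = (0, 0) \<and>
    G 0 1 (0, 1) = ([:2 * q / e * lam * kd q (-1) * b:], 0) \<and>
    G 0 0 (0, 1) = (smult (q / e * lam) [:- (q * a), 1:], 0))"
proof -
  obtain e where "e \<noteq> 0" and A: "G 0 0 (1, 0) = (0, [:e:])"
    and B: "G 0 0 (0, 1) = (smult (q / e * lam) [:- (q * a), 1:], 0)" and "lam = mu" "c = a + 1/2"
    using G_zero_zero_even_const[OF assms] by blast
  have C: "G 0 1 (1, 0) = (0, 0)" by (rule G_zero_one_even_eq_zero[OF assms])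
  obtain D where D: "G 0 1 (0, 1) = (D, 0)" by (metis G_odd_parity prod.collapse)
  have "(0, smult e (pcompose D [:- (q/2), 1:])) = vadd (G 0 0 (G 0 1 (0, 1))) (G 0 1 (G 0 0 (0, 1)))"
    using G_zero_even[of 0 D] G_zero_even[of 1 "smult (q / e * lam) [:- (q * a), 1:]"]
    unfolding A B C D by (simp add: vadd_def)
  also have "\<dots> = vsmult (2 * q) (L 1 1 (0, 1))"
    using GG_anticommutator[of 0 0 0 1 "(0, 1)"] by simp
  also have "\<dots> = (0, [:2 * q * lam * kd q (-1) * b:])"
    using \<open>lam = mu\<close> delta_b_eq_delta_d by (auto simp: L_odd kd_simps pcompose_1 vsmult_def)
  also have "\<dots> = (0, smult e [:2 * q / e * lam * kd q (-1) * b:])"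
    using \<open>e \<noteq> 0\<close> by simp
  finally have "pcompose D [:- (q/2), 1:] = [:2 * q / e * lam * kd q (-1) * b:]"
    using smult_cancel[OF \<open>e \<noteq> 0\<close>] by simp
  then have "D = [:2 * q / e * lam * kd q (-1) * b:]" by (simp add: pcompose_eq_const_iff)
  with \<open>e \<noteq> 0\<close> \<open>lam = mu\<close> \<open>c = a + 1/2\<close> A B C D show ?thesis by blast
qed

lemma classification_odd_const:
  assumes "degree (fst (G 0 0 (0, 1))) = 0"
  shows "lam = mu \<and> (\<exists>e. e \<noteq> 0 \<and> c = a - 1/2 \<and>
    G 0 0 (0, 1) = ([:e:], 0) \<and> G 0 1 (0, 1) = (0, 0) \<and>
    G 0 1 (1, 0) = (0, [:2 * q / e * lam * kd q (-1) * b:]) \<and>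
    G 0 0 (1, 0) = (0, smult (q / e * lam) [:- (q * a) + q / 2, 1:]))"
proof -
  interpret swapped: NSB_rank_two_module q mu lam c d a b "parity_swap L" "parity_swap G"
    by (rule NSB_rank_two_module_parity_swap)
  have "degree (snd (parity_swap G 0 0 (1, 0))) = 0" using assms by (simp add: parity_swap_def)
  then obtain e where "mu = lam" "e \<noteq> 0" "a = c + 1/2"
    and "parity_swap G 0 0 (1, 0) = (0, [:e:])" "parity_swap G 0 1 (1, 0) = (0, 0)"
    and "parity_swap G 0 1 (0, 1) = ([:2 * q / e * mu * kd q (-1) * d:], 0)"
    and "parity_swap G 0 0 (0, 1) = (smult (q / e * mu) [:- (q * c), 1:], 0)"
    using swapped.classification_even_const by blast
  moreover have "2 * q / e * mu * kd q (-1) * d = 2 * q / e * lam * kd q (-1) * b"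
    using \<open>mu = lam\<close> delta_b_eq_delta_d by (auto simp: mult.assoc)
  moreover have "smult (q / e * mu) [:- (q * c), 1:] = smult (q / e * lam) [:- (q * a) + q / 2, 1:]"
    using \<open>mu = lam\<close> \<open>a = c + 1/2\<close> by (simp add: algebra_simps)
  moreover have "c = a - 1/2" using \<open>a = c + 1/2\<close> by simp
  ultimately show ?thesis by (auto simp only: parity_swap_eq_iff swap_simp)
qed

end

theorem lemma5p1:
  fixes q lam mu a b c d :: complex
    and L G :: "int \<Rightarrow> nat \<Rightarrow> V \<Rightarrow> V"
  assumes hq: "q \<noteq> 0" and hlam: "lam \<noteq> 0" and hmu: "mu \<noteq> 0"
    and hmod: "NSB_module q L G"
    and hL0: "\<And>m i f. L m i (f, 0) =
       (smult (lam powi m)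
          (([:kd (of_nat i) 0 * (- (of_int m * q * a)), kd (of_nat i) 0:]
            + [:kd q (-1) * kd (of_nat i) 1 * b:])
           * pcompose f [:- (of_int m * q), 1:]), 0)"
    and hL1: "\<And>m i g. L m i (0, g) =
       (0, smult (mu powi m)
          (([:kd (of_nat i) 0 * (- (of_int m * q * c)), kd (of_nat i) 0:]
            + [:kd q (-1) * kd (of_nat i) 1 * d:])
           * pcompose g [:- (of_int m * q), 1:]))"
  shows "lam = mu \<and> kd q (-1) * b = kd q (-1) * d \<and>
    (\<exists>e. e \<noteq> 0 \<and>
      ((c = a + 1/2 \<and>
        G 0 0 (1, 0) = (0, [:e:]) \<and>
        G 0 1 (1, 0) = (0, 0) \<and>
        G 0 1 (0, 1) = ([:2 * q / e * lam * kd q (-1) * b:], 0) \<and>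
        G 0 0 (0, 1) = (smult (q / e * lam) [:- (q * a), 1:], 0))
     \<or>
       (c = a - 1/2 \<and>
        G 0 0 (0, 1) = ([:e:], 0) \<and>
        G 0 1 (0, 1) = (0, 0) \<and>
        G 0 1 (1, 0) = (0, [:2 * q / e * lam * kd q (-1) * b:]) \<and>
        G 0 0 (1, 0) = (0, smult (q / e * lam) [:- (q * a) + q / 2, 1:]))))"
proof -
  interpret NSB_rank_two_module q lam mu a b c d L G
    using assms by (rule NSB_rank_two_module.intro)
  from G_zero_zero_degree_cases show ?thesis
  proof
    assume "degree (snd (G 0 0 (1, 0))) = 0"
    with classification_even_const delta_b_eq_delta_d show ?thesis by blast
  next
    assume "degree (fst (G 0 0 (0, 1))) = 0"
    with classification_odd_const delta_b_eq_delta_d show ?thesis by blast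
  qed
qed

end
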